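(* Let $\mathbf X_I=(X_1,\dots,X_d)$ satisfy conditions (i) and (ii) below, let $I_1,\dots,I_p$ be a partition of $I$, let $1\le j<j'\le p$ and $\lambda_j,\lambda_{j'}>0$. Then $$\lim_{t\to\infty}P\big(M(I_j)>1-\lambda_j/t\,\big|\,M(I_{j'})>1-\lambda_{j'}/t\big)\,\lambda_{j'}\varepsilon_{\mathbf X_{I_{j'}}}(1)=\lim_{t\to\infty}P\big(M(I_{j'})>1-\lambda_{j'}/t\,\big|\,M(I_{j})>1-\lambda_{j}/t\big)\,\lambda_{j}\varepsilon_{\mathbf X_{I_{j}}}(1)$$ $$=\lambda_j\varepsilon_{\mathbf X_{I_j}}(1)+\lambda_{j'}\varepsilon_{\mathbf X_{I_{j'}}}(1)-\varepsilon_{\mathbf X_{I_j},\mathbf X_{I_{j'}}}(\lambda_j^{-1},\lambda_{j'}^{-1}).$$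
   Context: Let $d\ge 1$, $I=\{1,\dots,d\}$, and let $I_1,\dots,I_p$ ($1\le p\le d$) be a partition of $I$ into nonempty blocks of consecutive indices. Let $\mathbf X_I=(X_1,\dots,X_d)$ be a random vector with joint distribution function $F_{\mathbf X_I}$ and univariate marginal distribution functions $F_i$ such that: (i) $F_i(t)=\exp(-\sigma_i t^{-1/\eta})$ for $t>0$, $i=1,\dots,d$, for some constants $\sigma_i>0$ and $\eta\in(0,1]$; (ii) the function $\ell_{\mathbf X_I}(t_1,\dots,t_d)=-\ln F_{\mathbf X_I}(t_1,\dots,t_d)$, $(t_1,\dots,t_d)\in(0,\infty)^d$, is homogeneous of order $-1/\eta$, i.e. $\ell_{\mathbf X_I}(s\mathbf t)=s^{-1/\eta}\ell_{\mathbf X_I}(\mathbf t)$ for all $s>0$. For nonempty $J\subseteq I$, $M(J)=\max_{i\in J}F_i(X_i)$. For pairwise disjoint nonempty $J_1,\dots,J_q\subseteq I$ and $(\lambda_1,\dots,\lambda_q)\in(0,\infty)^q$, the extremal dependence function is $$\varepsilon_{\mathbf X_{J_1},\dots,\mathbf X_{J_q}}(\lambda_1,\dots,\lambda_q)=\frac{E\big(\max_{1\le k\le q}M(J_k)^{\lambda_k}\big)}{1-E\big(\max_{1\le k\le q}M(J_k)^{\lambda_k}\big)};$$ in particular $\varepsilon_{\mathbf X_J}(\lambda)=E(M(J)^{\lambda})/(1-E(M(J)^{\lambda}))$. *)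

theory Defs
  imports "HOL-Probability.Probability"
begin

definition marg_cdf :: "'a measure \<Rightarrow> (nat \<Rightarrow> 'a \<Rightarrow> real) \<Rightarrow> nat \<Rightarrow> real \<Rightarrow> real" where
  "marg_cdf P X i t = measure P {\<omega> \<in> space P. X i \<omega> \<le> t}"

definition joint_cdf :: "'a measure \<Rightarrow> (nat \<Rightarrow> 'a \<Rightarrow> real) \<Rightarrow> nat \<Rightarrow> (nat \<Rightarrow> real) \<Rightarrow> real" where
  "joint_cdf P X d t = measure P {\<omega> \<in> space P. \<forall>i\<in>{1..d}. X i \<omega> \<le> t i}"

definition ell :: "'a measure \<Rightarrow> (nat \<Rightarrow> 'a \<Rightarrow> real) \<Rightarrow> nat \<Rightarrow> (nat \<Rightarrow> real) \<Rightarrow> ereal" where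
  "ell P X d t = (if joint_cdf P X d t = 0 then \<infinity> else ereal (- ln (joint_cdf P X d t)))"

definition Mx :: "'a measure \<Rightarrow> (nat \<Rightarrow> 'a \<Rightarrow> real) \<Rightarrow> nat set \<Rightarrow> 'a \<Rightarrow> real" where
  "Mx P X J \<omega> = Max ((\<lambda>i. marg_cdf P X i (X i \<omega>)) ` J)"

definition ext_dep :: "'a measure \<Rightarrow> (nat \<Rightarrow> 'a \<Rightarrow> real) \<Rightarrow> (nat \<Rightarrow> nat set) \<Rightarrow> (nat \<Rightarrow> real) \<Rightarrow> nat set \<Rightarrow> real" where
  "ext_dep P X J lam K =
     (let e = (\<integral>\<omega>. Max ((\<lambda>k. Mx P X (J k) \<omega> powr lam k) ` K) \<partial>P) in e / (1 - e))"

definition cond_prob :: "'a measure \<Rightarrow> 'a set \<Rightarrow> 'a set \<Rightarrow> real" where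
  "cond_prob P A B = measure P (A \<inter> B) / measure P B"

end

theory Submission
  imports Defs
begin

(*
  The variables U_i = F_i(X_i) are uniform on [0,1], and homogeneity of ell makes their copula C
  max-stable, C(w^c) = C(w)^c. Hence C(exp(-s a)) = exp(-s Theta(a)), where the stable tail
  dependence function Theta is homogeneous of order one. For disjoint blocks J, J' the pair
  (M(J), M(J')) has distribution function H(v, v') = C(v on J, v' on J', 1 elsewhere), so
  max(M(J)^(1/l), M(J')^(1/l')) has distribution function v^Theta(l, l') and mean
  Theta/(Theta + 1): the extremal dependence function is Theta(l, l'). On the other hand
  t (1 - H(1 - a/t, 1 - b/t)) tends to Theta(a, b), and by inclusion-exclusion the conditional
  exceedance probability tends to (Theta(l, 0) + Theta(0, l') - Theta(l, l')) / Theta(0, l').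
*)

lemma nn_integral_eq_nn_integral_measure_greater:
  fixes M :: "'a measure" and V :: "'a \<Rightarrow> real"
  assumes "sigma_finite_measure M" and [measurable]: "V \<in> borel_measurable M"
    and nonneg: "\<And>\<omega>. \<omega> \<in> space M \<Longrightarrow> 0 \<le> V \<omega>"
  shows "(\<integral>\<^sup>+\<omega>. ennreal (V \<omega>) \<partial>M) = (\<integral>\<^sup>+v. emeasure M {\<omega> \<in> space M. 0 \<le> v \<and> v < V \<omega>} \<partial>lborel)"
proof -
  interpret M: sigma_finite_measure M by fact
  interpret pair_sigma_finite M lborel ..
  define f where "f \<omega> v = ennreal (indicator {0..<V \<omega>} v)" for \<omega> v
  have f_measurable: "case_prod f \<in> borel_measurable (M \<Otimes>\<^sub>M lborel)"
    unfolding f_def indicator_def atLeastLessThan_iff by measurable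
  have "(\<integral>\<^sup>+\<omega>. ennreal (V \<omega>) \<partial>M) = (\<integral>\<^sup>+\<omega>. (\<integral>\<^sup>+v. f \<omega> v \<partial>lborel) \<partial>M)"
    using nonneg by (intro nn_integral_cong) (simp add: f_def ennreal_indicator)
  also have "\<dots> = (\<integral>\<^sup>+v. (\<integral>\<^sup>+\<omega>. f \<omega> v \<partial>M) \<partial>lborel)"
    using Fubini'[OF f_measurable] by simp
  also have "\<dots> = (\<integral>\<^sup>+v. emeasure M {\<omega> \<in> space M. 0 \<le> v \<and> v < V \<omega>} \<partial>lborel)"
  proof (intro nn_integral_cong)
    fix v :: real
    have "(\<integral>\<^sup>+\<omega>. f \<omega> v \<partial>M) = (\<integral>\<^sup>+\<omega>. indicator {\<omega> \<in> space M. 0 \<le> v \<and> v < V \<omega>} \<omega> \<partial>M)"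
      unfolding f_def by (intro nn_integral_cong) (auto simp: indicator_def)
    then show "(\<integral>\<^sup>+\<omega>. f \<omega> v \<partial>M) = emeasure M {\<omega> \<in> space M. 0 \<le> v \<and> v < V \<omega>}"
      by (simp add: nn_integral_indicator)
  qed
  finally show ?thesis .
qed

lemma nn_integral_one_minus_powr:
  fixes \<theta> :: real assumes "\<theta> > 0"
  shows "(\<integral>\<^sup>+v. ennreal (indicator {0..1} v * (1 - v powr \<theta>)) \<partial>lborel) = \<theta> / (\<theta> + 1)"
proof -
  have "((\<lambda>v. 1 - v powr \<theta>) has_integral (1 - 1 / (\<theta> + 1))) {0..1::real}"
    using has_integral_diff[OF has_integral_const_real[of 1 0 1] has_integral_powr_from_0[of \<theta> 1]] assms
    by simp
  moreover have "1 - 1 / (\<theta> + 1) = \<theta> / (\<theta> + 1)" using assms by (simp add: field_simps)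
  ultimately have integral: "((\<lambda>v. 1 - v powr \<theta>) has_integral (\<theta> / (\<theta> + 1))) {0..1::real}"
    by simp
  have "0 \<le> 1 - v powr \<theta>" if "v \<in> {0..1}" for v :: real
    using powr_le1[of \<theta> v] assms that by auto
  then show ?thesis using nn_integral_has_integral_lebesgue[OF _ integral] by simp
qed

lemma (in prob_space) expectation_eq_of_powr_cdf:
  fixes V :: "'a \<Rightarrow> real"
  assumes [measurable]: "V \<in> borel_measurable M"
    and bounds: "\<And>\<omega>. \<omega> \<in> space M \<Longrightarrow> 0 \<le> V \<omega> \<and> V \<omega> \<le> 1" and "\<theta> > 0"
    and cdf: "\<And>v. 0 < v \<Longrightarrow> v < 1 \<Longrightarrow> prob {\<omega> \<in> space M. V \<omega> \<le> v} = v powr \<theta>"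
  shows "expectation V = \<theta> / (\<theta> + 1)"
proof -
  have tail: "emeasure M {\<omega> \<in> space M. 0 \<le> v \<and> v < V \<omega>} = ennreal (indicator {0..1} v * (1 - v powr \<theta>))"
    if v_nonzero: "v \<noteq> 0" for v
  proof -
    consider "v < 0" | "0 < v" "v < 1" | "v \<ge> 1"
      using v_nonzero by (metis linorder_neqE_linordered_idom not_le)
    then show ?thesis
    proof cases
      case 2
      have "{\<omega> \<in> space M. 0 \<le> v \<and> v < V \<omega>} = space M - {\<omega> \<in> space M. V \<omega> \<le> v}"
        using 2 by auto
      then show ?thesis
        using prob_compl[of "{\<omega> \<in> space M. V \<omega> \<le> v}"] cdf[OF 2] 2 by (simp add: emeasure_eq_measure)
    next
      case 3
      then have "{\<omega> \<in> space M. 0 \<le> v \<and> v < V \<omega>} = {}" using bounds by force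
      moreover have "indicator {0..1} v * (1 - v powr \<theta>) = (0::real)"
        using 3 by (cases "v = 1") auto
      ultimately show ?thesis by (simp only:) simp
    qed auto
  qed
  have "(\<integral>\<^sup>+\<omega>. ennreal (V \<omega>) \<partial>M) = (\<integral>\<^sup>+v. emeasure M {\<omega> \<in> space M. 0 \<le> v \<and> v < V \<omega>} \<partial>lborel)"
    using bounds by (intro nn_integral_eq_nn_integral_measure_greater sigma_finite_measure_axioms) auto
  also have "\<dots> = (\<integral>\<^sup>+v. ennreal (indicator {0..1} v * (1 - v powr \<theta>)) \<partial>lborel)"
    using AE_lborel_singleton[of 0] by (intro nn_integral_cong_AE) (auto elim!: eventually_mono simp: tail)
  finally have "(\<integral>\<^sup>+\<omega>. ennreal (V \<omega>) \<partial>M) = \<theta> / (\<theta> + 1)"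
    using nn_integral_one_minus_powr[OF \<open>\<theta> > 0\<close>] by simp
  moreover have "expectation V = enn2real (\<integral>\<^sup>+\<omega>. ennreal (V \<omega>) \<partial>M)"
    using bounds by (intro integral_eq_nn_integral) auto
  ultimately show ?thesis using \<open>\<theta> > 0\<close> by simp
qed

lemma exp_minus_le_quadratic:
  fixes x :: real assumes "x \<ge> 0"
  shows "exp (- x) - (1 - x) \<le> x\<^sup>2"
proof -
  have "exp (- x) \<le> 1 / (1 + x)"
    using exp_ge_add_one_self[of x] \<open>x \<ge> 0\<close> by (simp add: exp_minus field_simps)
  also have "\<dots> = (1 - x) + x\<^sup>2 / (1 + x)" using \<open>x \<ge> 0\<close> by (simp add: field_simps power2_eq_square)
  also have "x\<^sup>2 / (1 + x) \<le> x\<^sup>2 / 1" using \<open>x \<ge> 0\<close> by (intro divide_left_mono) auto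
  finally show ?thesis by simp
qed

lemma powr_inverse_le_iff:
  fixes m v l :: real
  assumes "0 \<le> m" "0 < v" "l > 0"
  shows "m powr (1 / l) \<le> v \<longleftrightarrow> m \<le> v powr l"
proof
  assume "m powr (1 / l) \<le> v"
  then have "(m powr (1 / l)) powr l \<le> v powr l" using assms by (intro powr_mono2) auto
  then show "m \<le> v powr l" using assms by (simp add: powr_powr)
next
  assume "m \<le> v powr l"
  then have "m powr (1 / l) \<le> (v powr l) powr (1 / l)" using assms by (intro powr_mono2) auto
  then show "m powr (1 / l) \<le> v" using assms by (simp add: powr_powr)
qed

lemma ext_dep_eq_of_expectation:
  assumes "(\<integral>\<omega>. Max ((\<lambda>k. Mx P X (J k) \<omega> powr lam k) ` K) \<partial>P) = \<theta> / (\<theta> + 1)" "\<theta> \<ge> 0"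
  shows "ext_dep P X J lam K = \<theta>"
proof -
  have "1 - \<theta> / (\<theta> + 1) = 1 / (\<theta> + 1)" using assms(2) by (simp add: field_simps)
  then show ?thesis using assms unfolding ext_dep_def by (simp add: Let_def)
qed

lemma joint_cdf_cong:
  "(\<And>i. i \<in> {1..d} \<Longrightarrow> t i = t' i) \<Longrightarrow> joint_cdf P X d t = joint_cdf P X d t'"
  unfolding joint_cdf_def by (metis (no_types, lifting))

lemma tendsto_of_abs_diff_le:
  fixes f g :: "'b \<Rightarrow> real"
  assumes "eventually (\<lambda>x. \<bar>f x - L\<bar> \<le> g x) F" "(g \<longlongrightarrow> 0) F"
  shows "(f \<longlongrightarrow> L) F"
proof -
  have "((\<lambda>x. f x - L) \<longlongrightarrow> 0) F"
    using assms(2) by (rule Lim_null_comparison[rotated]) (use assms(1) in simp)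
  then show ?thesis by (rule Lim_null[THEN iffD2])
qed

locale max_stable_model =
  fixes P :: "'a measure" and X :: "nat \<Rightarrow> 'a \<Rightarrow> real"
    and d :: nat and \<sigma> :: "nat \<Rightarrow> real" and \<eta> :: real
  assumes prob_space_P: "prob_space P"
    and rv: "\<And>i. i \<in> {1..d} \<Longrightarrow> X i \<in> borel_measurable P"
    and sigma: "\<And>i. i \<in> {1..d} \<Longrightarrow> \<sigma> i > 0"
    and eta: "0 < \<eta>" "\<eta> \<le> 1"
    and marg: "\<And>i t. i \<in> {1..d} \<Longrightarrow> t > 0 \<Longrightarrow>
                  marg_cdf P X i t = exp (- \<sigma> i * t powr (- 1 / \<eta>))"
    and homog: "\<And>t s. (\<forall>i\<in>{1..d}. t i > 0) \<Longrightarrow> s > 0 \<Longrightarrow>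
                  ell P X d (\<lambda>i. s * t i) = ereal (s powr (- 1 / \<eta>)) * ell P X d t"
begin

sublocale prob_space P by (rule prob_space_P)

definition U :: "nat \<Rightarrow> 'a \<Rightarrow> real" where
  "U i \<omega> = marg_cdf P X i (X i \<omega>)"

definition marg_quantile :: "nat \<Rightarrow> real \<Rightarrow> real" where
  "marg_quantile i u = (\<sigma> i / - ln u) powr \<eta>"

definition copula :: "(nat \<Rightarrow> real) \<Rightarrow> real" where
  "copula w = prob {\<omega> \<in> space P. \<forall>i\<in>{1..d}. U i \<omega> \<le> w i}"

definition stdf :: "(nat \<Rightarrow> real) \<Rightarrow> real" where
  "stdf a = - ln (copula (\<lambda>i. exp (- a i)))"

lemma marg_cdf_mono: "i \<in> {1..d} \<Longrightarrow> mono (marg_cdf P X i)"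
  unfolding marg_cdf_def using rv by (intro monoI finite_measure_mono) auto

lemma U_measurable [measurable]: "i \<in> {1..d} \<Longrightarrow> U i \<in> borel_measurable P"
  unfolding U_def[abs_def]
  using measurable_compose[OF rv borel_measurable_mono[OF marg_cdf_mono]] by simp

lemma U_nonneg: "0 \<le> U i \<omega>" and U_le_one: "U i \<omega> \<le> 1"
  unfolding U_def marg_cdf_def by auto

lemma marg_quantile_pos: "i \<in> {1..d} \<Longrightarrow> 0 < u \<Longrightarrow> u < 1 \<Longrightarrow> marg_quantile i u > 0"
  unfolding marg_quantile_def using sigma[of i] by auto

lemma marg_cdf_marg_quantile:
  assumes i: "i \<in> {1..d}" and u: "0 < u" "u < 1"
  shows "marg_cdf P X i (marg_quantile i u) = u"
proof -
  have "marg_quantile i u powr (- 1 / \<eta>) = (\<sigma> i / - ln u) powr (\<eta> * (- 1 / \<eta>))"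
    unfolding marg_quantile_def by (simp add: powr_powr)
  also have "\<dots> = - ln u / \<sigma> i" using eta u sigma[OF i] by (simp add: powr_minus_divide)
  finally show ?thesis using marg[OF i marg_quantile_pos[OF i u]] sigma[OF i] u by simp
qed

lemma marg_cdf_le_iff:
  assumes i: "i \<in> {1..d}" and u: "0 < u" "u < 1"
  shows "marg_cdf P X i x \<le> u \<longleftrightarrow> x \<le> marg_quantile i u"
proof
  assume "x \<le> marg_quantile i u"
  then show "marg_cdf P X i x \<le> u"
    using monoD[OF marg_cdf_mono[OF i]] marg_cdf_marg_quantile[OF i u] by metis
next
  assume le: "marg_cdf P X i x \<le> u"
  show "x \<le> marg_quantile i u"
  proof (rule ccontr)
    assume "\<not> x \<le> marg_quantile i u"
    then have less: "marg_quantile i u < x" by simp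
    have q: "marg_quantile i u > 0" using marg_quantile_pos[OF i u] .
    have "x powr (- 1 / \<eta>) < marg_quantile i u powr (- 1 / \<eta>)"
      using eta q less by (intro powr_less_mono2_neg) auto
    then have "marg_cdf P X i (marg_quantile i u) < marg_cdf P X i x"
      using marg[OF i] q less sigma[OF i] by simp
    then show False using le marg_cdf_marg_quantile[OF i u] by simp
  qed
qed

lemma prob_U_le:
  assumes i: "i \<in> {1..d}" and u: "0 < u" "u \<le> 1"
  shows "prob {\<omega> \<in> space P. U i \<omega> \<le> u} = u"
proof (cases "u = 1")
  case True
  then show ?thesis using U_le_one by (simp add: prob_space)
next
  case False
  then have "{\<omega> \<in> space P. U i \<omega> \<le> u} = {\<omega> \<in> space P. X i \<omega> \<le> marg_quantile i u}"
    unfolding U_def using marg_cdf_le_iff[OF i] u by auto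
  then show ?thesis using marg_cdf_marg_quantile[OF i] u False unfolding marg_cdf_def by simp
qed

lemma marg_quantile_powr:
  assumes "0 < u" "u < 1" "c > 0"
  shows "marg_quantile i (u powr c) = c powr (- \<eta>) * marg_quantile i u"
proof -
  have "marg_quantile i (u powr c) = ((1 / c) * (\<sigma> i / - ln u)) powr \<eta>"
    using assms unfolding marg_quantile_def by (simp add: ln_powr)
  also have "\<dots> = (1 / c) powr \<eta> * marg_quantile i u"
    unfolding marg_quantile_def by (rule powr_mult)
  also have "(1 / c) powr \<eta> = c powr (- \<eta>)"
    using assms by (simp add: powr_divide powr_minus_divide)
  finally show ?thesis .
qed

lemma copula_nonneg: "0 \<le> copula w"
  unfolding copula_def by simp

lemma copula_one: "copula (\<lambda>_. 1) = 1"
  unfolding copula_def using U_le_one by (simp add: prob_space)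

lemma copula_mono: "(\<And>i. i \<in> {1..d} \<Longrightarrow> w i \<le> w' i) \<Longrightarrow> copula w \<le> copula w'"
  unfolding copula_def by (intro finite_measure_mono) (auto intro: order_trans)

lemma copula_le_coordinate:
  assumes "i \<in> {1..d}" "0 < w i" "w i \<le> 1"
  shows "copula w \<le> w i"
proof -
  have "copula w \<le> prob {\<omega> \<in> space P. U i \<omega> \<le> w i}"
    unfolding copula_def using assms(1) by (intro finite_measure_mono) auto
  then show ?thesis using prob_U_le assms by simp
qed

lemma copula_eq_joint_cdf:
  assumes "\<forall>i\<in>{1..d}. 0 < w i \<and> w i < 1"
  shows "copula w = joint_cdf P X d (\<lambda>i. marg_quantile i (w i))"
proof -
  have "{\<omega> \<in> space P. \<forall>i\<in>{1..d}. U i \<omega> \<le> w i}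
      = {\<omega> \<in> space P. \<forall>i\<in>{1..d}. X i \<omega> \<le> marg_quantile i (w i)}"
    using assms marg_cdf_le_iff unfolding U_def by auto
  then show ?thesis unfolding copula_def joint_cdf_def by simp
qed

text \<open>Homogeneity of \<open>ell\<close> says exactly that the copula is max-stable.\<close>
lemma copula_powr_interior:
  assumes w: "\<forall>i\<in>{1..d}. 0 < w i \<and> w i < 1" and c: "c > 0"
  shows "copula (\<lambda>i. w i powr c) = copula w powr c"
proof -
  define t where "t i = marg_quantile i (w i)" for i
  define s where "s = c powr (- \<eta>)"
  have t: "\<forall>i\<in>{1..d}. t i > 0" using w marg_quantile_pos unfolding t_def by auto
  have s: "s > 0" "s powr (- 1 / \<eta>) = c" unfolding s_def using eta c by (auto simp: powr_powr)
  have wc: "\<forall>i\<in>{1..d}. 0 < w i powr c \<and> w i powr c < 1"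
    using w c powr_less_mono2[of c _ 1] by auto
  have "copula (\<lambda>i. w i powr c) = joint_cdf P X d (\<lambda>i. marg_quantile i (w i powr c))"
    using copula_eq_joint_cdf[OF wc] by simp
  also have "\<dots> = joint_cdf P X d (\<lambda>i. s * t i)"
    using marg_quantile_powr w c unfolding s_def t_def by (intro joint_cdf_cong) auto
  finally have scaled: "copula (\<lambda>i. w i powr c) = joint_cdf P X d (\<lambda>i. s * t i)" .
  have unscaled: "copula w = joint_cdf P X d t" using copula_eq_joint_cdf[OF w] unfolding t_def by simp
  have ell_scaled: "ell P X d (\<lambda>i. s * t i) = ereal c * ell P X d t"
    using homog[OF t s(1)] s(2) by simp
  have nonneg: "joint_cdf P X d t' \<ge> 0" for t' unfolding joint_cdf_def by simp
  show ?thesis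
  proof (cases "joint_cdf P X d t = 0")
    case True
    then have "ell P X d (\<lambda>i. s * t i) = \<infinity>" using ell_scaled c unfolding ell_def by simp
    then have "joint_cdf P X d (\<lambda>i. s * t i) = 0" unfolding ell_def by (auto split: if_splits)
    then show ?thesis using scaled unscaled True by simp
  next
    case False
    then have "ell P X d (\<lambda>i. s * t i) = ereal (c * - ln (joint_cdf P X d t))"
      using ell_scaled unfolding ell_def by simp
    then have "joint_cdf P X d (\<lambda>i. s * t i) \<noteq> 0"
      and "ln (joint_cdf P X d (\<lambda>i. s * t i)) = c * ln (joint_cdf P X d t)"
      unfolding ell_def by (auto split: if_splits)
    then have "joint_cdf P X d (\<lambda>i. s * t i) = exp (c * ln (joint_cdf P X d t))"
      using nonneg by (metis exp_ln less_eq_real_def)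
    then show ?thesis using scaled unscaled False nonneg[of t] by (simp add: powr_def)
  qed
qed

lemma copula_le_add_sum:
  assumes w: "\<forall>i\<in>{1..d}. 0 < w i \<and> w i \<le> w' i \<and> w' i \<le> 1"
  shows "copula w' \<le> copula w + (\<Sum>i\<in>{1..d}. w' i - w i)"
proof -
  define E where "E w = {\<omega> \<in> space P. \<forall>i\<in>{1..d}. U i \<omega> \<le> w i}" for w
  define D where "D i = {\<omega> \<in> space P. U i \<omega> \<le> w' i} - {\<omega> \<in> space P. U i \<omega> \<le> w i}" for i
  have sets_D: "D i \<in> sets P" if "i \<in> {1..d}" for i unfolding D_def using that by measurable
  have prob_D: "prob (D i) = w' i - w i" if i: "i \<in> {1..d}" for i
  proof -
    have "prob (D i) = prob {\<omega> \<in> space P. U i \<omega> \<le> w' i} - prob {\<omega> \<in> space P. U i \<omega> \<le> w i}"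
      unfolding D_def using i w by (intro finite_measure_Diff) (auto intro: order_trans)
    moreover have "0 < w i" "w i \<le> w' i" "w' i \<le> 1" using w i by auto
    ultimately show ?thesis using prob_U_le[OF i, of "w i"] prob_U_le[OF i, of "w' i"] by simp
  qed
  have "copula w' = prob (E w')" unfolding copula_def E_def ..
  also have "\<dots> \<le> prob (E w \<union> (\<Union>i\<in>{1..d}. D i))"
    using sets_D unfolding E_def D_def by (intro finite_measure_mono) auto
  also have "\<dots> \<le> prob (E w) + prob (\<Union>i\<in>{1..d}. D i)"
    using sets_D unfolding E_def by (intro measure_Un_le) auto
  also have "prob (\<Union>i\<in>{1..d}. D i) \<le> (\<Sum>i\<in>{1..d}. prob (D i))"
    using sets_D by (intro measure_UNION_le) auto
  finally show ?thesis using prob_D unfolding copula_def E_def by simp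
qed

lemma copula_lipschitz:
  assumes w: "\<forall>i\<in>{1..d}. 0 < w i \<and> w i \<le> 1" and w': "\<forall>i\<in>{1..d}. 0 < w' i \<and> w' i \<le> 1"
  shows "\<bar>copula w - copula w'\<bar> \<le> (\<Sum>i\<in>{1..d}. \<bar>w i - w' i\<bar>)"
proof -
  define m where "m i = min (w i) (w' i)" for i
  have "copula w \<le> copula m + (\<Sum>i\<in>{1..d}. w i - m i)"
    using w w' unfolding m_def by (intro copula_le_add_sum) auto
  moreover have "copula w' \<le> copula m + (\<Sum>i\<in>{1..d}. w' i - m i)"
    using w w' unfolding m_def by (intro copula_le_add_sum) auto
  moreover have "copula m \<le> copula w" "copula m \<le> copula w'"
    unfolding m_def by (auto intro: copula_mono)
  moreover have "(\<Sum>i\<in>{1..d}. w i - m i) \<le> (\<Sum>i\<in>{1..d}. \<bar>w i - w' i\<bar>)"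
    "(\<Sum>i\<in>{1..d}. w' i - m i) \<le> (\<Sum>i\<in>{1..d}. \<bar>w i - w' i\<bar>)"
    by (auto intro!: sum_mono simp: m_def)
  ultimately show ?thesis by linarith
qed

lemma tendsto_copula:
  assumes wn: "\<And>n. \<forall>i\<in>{1..d}. 0 < wn n i \<and> wn n i \<le> 1" and w: "\<forall>i\<in>{1..d}. 0 < w i \<and> w i \<le> 1"
    and lim: "\<And>i. i \<in> {1..d} \<Longrightarrow> ((\<lambda>n. wn n i) \<longlongrightarrow> w i) F"
  shows "((\<lambda>n. copula (wn n)) \<longlongrightarrow> copula w) F"
proof (rule tendsto_of_abs_diff_le)
  show "\<forall>\<^sub>F n in F. \<bar>copula (wn n) - copula w\<bar> \<le> (\<Sum>i\<in>{1..d}. \<bar>wn n i - w i\<bar>)"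
    by (intro always_eventually allI copula_lipschitz wn w)
  show "((\<lambda>n. \<Sum>i\<in>{1..d}. \<bar>wn n i - w i\<bar>) \<longlongrightarrow> 0) F"
    by (intro tendsto_null_sum tendsto_rabs_zero LIM_zero lim)
qed

text \<open>Coordinates equal to \<open>1\<close> correspond to infinite arguments of \<open>ell\<close>, so max-stability
  extends to them only by approximation from below.\<close>
lemma copula_powr:
  assumes w: "\<forall>i\<in>{1..d}. 0 < w i \<and> w i \<le> 1" and c: "c > 0"
  shows "copula (\<lambda>i. w i powr c) = copula w powr c"
proof -
  define e where "e n = 1 - inverse (real (Suc (Suc n)))" for n
  define wn where "wn n i = min (w i) (e n)" for n i
  have "0 < e n" "e n < 1" for n
    unfolding e_def by (auto simp: field_simps)
  then have wn: "\<forall>i\<in>{1..d}. 0 < wn n i \<and> wn n i < 1" for n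
    using w unfolding wn_def by (auto simp: min_less_iff_disj)
  have wn_powr: "\<forall>i\<in>{1..d}. 0 < wn n i powr c \<and> wn n i powr c \<le> 1" for n
  proof
    fix i assume "i \<in> {1..d}"
    then have "0 < wn n i" "wn n i < 1" using wn[of n] by blast+
    then show "0 < wn n i powr c \<and> wn n i powr c \<le> 1" using c by (simp add: powr_le1)
  qed
  have w_nonzero: "w i \<noteq> 0" if "i \<in> {1..d}" for i
    using w that by fastforce
  have w_powr: "\<forall>i\<in>{1..d}. 0 < w i powr c \<and> w i powr c \<le> 1"
    using w c powr_le1[of c] by fastforce
  have "e \<longlonglongrightarrow> 1 - 0"
    unfolding e_def by (intro tendsto_diff tendsto_const LIMSEQ_Suc[OF LIMSEQ_inverse_real_of_nat])
  then have lim: "(\<lambda>n. wn n i) \<longlonglongrightarrow> w i" if "i \<in> {1..d}" for i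
    using tendsto_min[OF tendsto_const, of e 1 sequentially "w i"] w that unfolding wn_def by simp
  have "(\<lambda>n. copula (\<lambda>i. wn n i powr c)) \<longlonglongrightarrow> copula (\<lambda>i. w i powr c)"
    by (intro tendsto_copula[OF wn_powr w_powr] tendsto_powr[OF lim tendsto_const]) (auto simp: w_nonzero)
  moreover have "(\<lambda>n. copula (wn n) powr c) \<longlonglongrightarrow> copula w powr c"
  proof (intro tendsto_powr'[OF tendsto_copula[OF _ w lim] tendsto_const])
    show "\<forall>i\<in>{1..d}. 0 < wn n i \<and> wn n i \<le> 1" for n using wn[of n] by (blast intro: less_imp_le)
  qed (use c copula_nonneg in auto)
  ultimately show ?thesis
    unfolding copula_powr_interior[OF wn c] by (rule LIMSEQ_unique)
qed

lemma copula_exp_pos: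
  assumes a: "\<forall>i\<in>{1..d}. a i \<ge> 0"
  shows "copula (\<lambda>i. exp (- a i)) > 0"
proof -
  define A where "A = (\<Sum>i\<in>{1..d}. a i)"
  define c where "c = 1 / (2 * (A + 1))"
  have A: "A \<ge> 0" unfolding A_def using a by (intro sum_nonneg) auto
  have c: "c > 0" "c * A < 1" unfolding c_def using A by (auto simp: field_simps)
  have bounds: "\<forall>i\<in>{1..d}. 0 < exp (- c * a i) \<and> exp (- c * a i) \<le> 1"
    using a c by auto
  have "\<bar>copula (\<lambda>i. exp (- c * a i)) - copula (\<lambda>_. 1)\<bar> \<le> (\<Sum>i\<in>{1..d}. \<bar>exp (- c * a i) - 1\<bar>)"
    using bounds by (intro copula_lipschitz) auto
  also have "\<dots> \<le> (\<Sum>i\<in>{1..d}. c * a i)"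
  proof (intro sum_mono)
    fix i assume "i \<in> {1..d}"
    then show "\<bar>exp (- c * a i) - 1\<bar> \<le> c * a i"
      using bounds exp_ge_add_one_self[of "- c * a i"] by auto
  qed
  also have "\<dots> = c * A" unfolding A_def by (simp add: sum_distrib_left)
  finally have "copula (\<lambda>i. exp (- c * a i)) > 0" using c copula_one by linarith
  moreover have "copula (\<lambda>i. exp (- a i)) = copula (\<lambda>i. exp (- c * a i)) powr (1 / c)"
    using copula_powr[OF bounds, of "1 / c"] c by (simp add: exp_powr_real)
  ultimately show ?thesis by simp
qed

lemma copula_exp_stdf:
  assumes "\<forall>i\<in>{1..d}. a i \<ge> 0" "s > 0"
  shows "copula (\<lambda>i. exp (- s * a i)) = exp (- s * stdf a)"
proof -
  have "copula (\<lambda>i. exp (- s * a i)) = copula (\<lambda>i. exp (- a i)) powr s"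
    using copula_powr[of "\<lambda>i. exp (- a i)" s] assms by (simp add: exp_powr_real mult.commute)
  then show ?thesis using copula_exp_pos[OF assms(1)] unfolding stdf_def by (simp add: powr_def)
qed

lemma stdf_ge_coordinate:
  assumes "\<forall>i\<in>{1..d}. a i \<ge> 0" "i \<in> {1..d}"
  shows "a i \<le> stdf a"
proof -
  have "copula (\<lambda>i. exp (- a i)) \<le> exp (- a i)"
    using assms by (intro copula_le_coordinate) auto
  then have "ln (copula (\<lambda>i. exp (- a i))) \<le> - a i"
    using copula_exp_pos[OF assms(1)] ln_le_cancel_iff[of _ "exp (- a i)"] by simp
  then show ?thesis unfolding stdf_def by simp
qed

lemma stdf_scale:
  assumes "\<forall>i\<in>{1..d}. a i \<ge> 0" "c > 0"
  shows "stdf (\<lambda>i. c * a i) = c * stdf a"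
  using copula_exp_stdf[OF assms] unfolding stdf_def by (simp add: mult_ac)

lemma Mx_eq_Max_U: "Mx P X J \<omega> = Max ((\<lambda>i. U i \<omega>) ` J)"
  unfolding Mx_def U_def ..

lemma Mx_le_iff: "J \<subseteq> {1..d} \<Longrightarrow> J \<noteq> {} \<Longrightarrow> Mx P X J \<omega> \<le> v \<longleftrightarrow> (\<forall>i\<in>J. U i \<omega> \<le> v)"
  unfolding Mx_eq_Max_U by (simp add: finite_subset)

lemma Mx_nonneg: "J \<subseteq> {1..d} \<Longrightarrow> J \<noteq> {} \<Longrightarrow> 0 \<le> Mx P X J \<omega>"
  unfolding Mx_eq_Max_U using U_nonneg by (subst Max_ge_iff) (auto simp: finite_subset)

lemma Mx_le_one: "J \<subseteq> {1..d} \<Longrightarrow> J \<noteq> {} \<Longrightarrow> Mx P X J \<omega> \<le> 1"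
  using Mx_le_iff U_le_one by simp

lemma Mx_measurable: "J \<subseteq> {1..d} \<Longrightarrow> (\<lambda>\<omega>. Mx P X J \<omega>) \<in> borel_measurable P"
  unfolding Mx_eq_Max_U by (intro borel_measurable_Max) (auto simp: finite_subset)

end

locale block_pair = max_stable_model +
  fixes B :: "nat \<Rightarrow> nat set" and j j' :: nat
  assumes blocks_subset: "B j \<subseteq> {1..d}" "B j' \<subseteq> {1..d}"
    and blocks_nonempty: "B j \<noteq> {}" "B j' \<noteq> {}"
    and blocks_disjoint: "B j \<inter> B j' = {}"
begin

lemmas Mx_block_measurable [measurable] =
  Mx_measurable[OF blocks_subset(1)] Mx_measurable[OF blocks_subset(2)]

lemmas Mx_block_le_iff = Mx_le_iff[OF blocks_subset(1) blocks_nonempty(1)]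
  Mx_le_iff[OF blocks_subset(2) blocks_nonempty(2)]

lemmas Mx_block_nonneg = Mx_nonneg[OF blocks_subset(1) blocks_nonempty(1)]
  Mx_nonneg[OF blocks_subset(2) blocks_nonempty(2)]

lemmas Mx_block_le_one = Mx_le_one[OF blocks_subset(1) blocks_nonempty(1)]
  Mx_le_one[OF blocks_subset(2) blocks_nonempty(2)]

definition block_cdf :: "real \<Rightarrow> real \<Rightarrow> real" where
  "block_cdf v v' = prob {\<omega> \<in> space P. Mx P X (B j) \<omega> \<le> v \<and> Mx P X (B j') \<omega> \<le> v'}"

definition block_weight :: "real \<Rightarrow> real \<Rightarrow> nat \<Rightarrow> real" where
  "block_weight \<alpha> \<beta> i = (if i \<in> B j then \<alpha> else if i \<in> B j' then \<beta> else 0)"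

definition block_stdf :: "real \<Rightarrow> real \<Rightarrow> real" where
  "block_stdf \<alpha> \<beta> = stdf (block_weight \<alpha> \<beta>)"

lemma block_cdf_eq_copula:
  "block_cdf v v' = copula (\<lambda>i. if i \<in> B j then v else if i \<in> B j' then v' else 1)"
proof -
  have "{\<omega> \<in> space P. Mx P X (B j) \<omega> \<le> v \<and> Mx P X (B j') \<omega> \<le> v'}
      = {\<omega> \<in> space P. \<forall>i\<in>{1..d}. U i \<omega> \<le> (if i \<in> B j then v else if i \<in> B j' then v' else 1)}"
    using blocks_subset blocks_disjoint U_le_one unfolding Mx_block_le_iff by auto
  then show ?thesis unfolding block_cdf_def copula_def by simp
qed

lemma block_cdf_exp:
  assumes "\<alpha> \<ge> 0" "\<beta> \<ge> 0" "s > 0"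
  shows "block_cdf (exp (- s * \<alpha>)) (exp (- s * \<beta>)) = exp (- s * block_stdf \<alpha> \<beta>)"
proof -
  have "(\<lambda>i. if i \<in> B j then exp (- s * \<alpha>) else if i \<in> B j' then exp (- s * \<beta>) else 1)
      = (\<lambda>i. exp (- s * block_weight \<alpha> \<beta> i))"
    unfolding block_weight_def by auto
  then show ?thesis
    using copula_exp_stdf[of "block_weight \<alpha> \<beta>" s] assms
    unfolding block_cdf_eq_copula block_stdf_def block_weight_def by simp
qed

lemma block_cdf_powr:
  assumes "\<alpha> \<ge> 0" "\<beta> \<ge> 0" "0 < v" "v < 1"
  shows "block_cdf (v powr \<alpha>) (v powr \<beta>) = v powr block_stdf \<alpha> \<beta>"
  using block_cdf_exp[of \<alpha> \<beta> "- ln v"] assms by (simp add: powr_def mult.commute)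

lemma block_weight_nonneg: "\<alpha> \<ge> 0 \<Longrightarrow> \<beta> \<ge> 0 \<Longrightarrow> \<forall>i\<in>{1..d}. block_weight \<alpha> \<beta> i \<ge> 0"
  unfolding block_weight_def by simp

lemma block_stdf_ge_max:
  assumes "\<alpha> \<ge> 0" "\<beta> \<ge> 0"
  shows "max \<alpha> \<beta> \<le> block_stdf \<alpha> \<beta>"
proof -
  obtain i i' where i: "i \<in> B j" and i': "i' \<in> B j'" using blocks_nonempty by blast
  then have "block_weight \<alpha> \<beta> i = \<alpha>" "block_weight \<alpha> \<beta> i' = \<beta>"
    using blocks_disjoint unfolding block_weight_def by auto
  moreover have "i \<in> {1..d}" "i' \<in> {1..d}" using i i' blocks_subset by auto
  ultimately show ?thesis
    using stdf_ge_coordinate[OF block_weight_nonneg[OF assms]] unfolding block_stdf_def by force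
qed

lemma block_stdf_scale:
  assumes "c > 0" "\<alpha> \<ge> 0" "\<beta> \<ge> 0"
  shows "block_stdf (c * \<alpha>) (c * \<beta>) = c * block_stdf \<alpha> \<beta>"
proof -
  have "block_weight (c * \<alpha>) (c * \<beta>) = (\<lambda>i. c * block_weight \<alpha> \<beta> i)"
    unfolding block_weight_def by auto
  then show ?thesis
    unfolding block_stdf_def using stdf_scale[OF block_weight_nonneg[OF assms(2,3)] assms(1)] by simp
qed

lemma block_cdf_lipschitz:
  assumes "0 < v" "v \<le> 1" "0 < v'" "v' \<le> 1" "0 < u" "u \<le> 1" "0 < u'" "u' \<le> 1"
  shows "\<bar>block_cdf v v' - block_cdf u u'\<bar> \<le> real d * (\<bar>v - u\<bar> + \<bar>v' - u'\<bar>)"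
proof -
  have "\<bar>block_cdf v v' - block_cdf u u'\<bar>
      \<le> (\<Sum>i\<in>{1..d}. \<bar>(if i \<in> B j then v else if i \<in> B j' then v' else 1)
                     - (if i \<in> B j then u else if i \<in> B j' then u' else 1)\<bar>)"
    unfolding block_cdf_eq_copula using assms by (intro copula_lipschitz) auto
  also have "\<dots> \<le> (\<Sum>i\<in>{1..d}. \<bar>v - u\<bar> + \<bar>v' - u'\<bar>)"
    by (intro sum_mono) auto
  finally show ?thesis by simp
qed

lemma block_cdf_tail_bound:
  assumes "\<alpha> \<ge> 0" "\<beta> \<ge> 0" "t \<ge> \<alpha> + \<beta> + 1"
  shows "\<bar>t * (1 - block_cdf (1 - \<alpha> / t) (1 - \<beta> / t)) - block_stdf \<alpha> \<beta>\<bar>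
    \<le> (real d * (\<alpha>\<^sup>2 + \<beta>\<^sup>2) + (block_stdf \<alpha> \<beta>)\<^sup>2) / t"
proof -
  define \<theta> where "\<theta> = block_stdf \<alpha> \<beta>"
  define x y z where "x = \<alpha> / t" and "y = \<beta> / t" and "z = \<theta> / t"
  have t: "t > 0" using assms by linarith
  have x: "0 \<le> x" "x < 1" and y: "0 \<le> y" "y < 1"
    unfolding x_def y_def using assms t by (auto simp: field_simps)
  have z: "0 \<le> z" unfolding z_def \<theta>_def using block_stdf_ge_max[OF assms(1,2)] assms t by simp
  have "block_cdf (exp (- (1 / t) * \<alpha>)) (exp (- (1 / t) * \<beta>)) = exp (- (1 / t) * \<theta>)"
    unfolding \<theta>_def using assms t by (intro block_cdf_exp) auto
  then have exp_eq: "block_cdf (exp (- x)) (exp (- y)) = exp (- z)" unfolding x_def y_def z_def by simp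
  \<comment> \<open>The error splits into the linearisations of the block cdf and of \<open>exp\<close>,
    both quadratic in \<open>1 / t\<close>.\<close>
  define D where "D = block_cdf (1 - x) (1 - y) - exp (- z)"
  define E where "E = exp (- z) - (1 - z)"
  have "\<bar>D\<bar> \<le> real d * (\<bar>(1 - x) - exp (- x)\<bar> + \<bar>(1 - y) - exp (- y)\<bar>)"
    unfolding D_def exp_eq[symmetric] using x y by (intro block_cdf_lipschitz) auto
  also have "\<dots> \<le> real d * (x\<^sup>2 + y\<^sup>2)"
    using exp_minus_le_quadratic[OF x(1)] exp_minus_le_quadratic[OF y(1)]
      exp_ge_add_one_self[of "- x"] exp_ge_add_one_self[of "- y"]
    by (intro mult_left_mono) auto
  finally have D: "\<bar>D\<bar> \<le> real d * (x\<^sup>2 + y\<^sup>2)" .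
  have E: "0 \<le> E" "E \<le> z\<^sup>2"
    unfolding E_def using exp_minus_le_quadratic[OF z] exp_ge_add_one_self[of "- z"] by auto
  have "t * (1 - block_cdf (1 - x) (1 - y)) - \<theta> = - (t * D) - t * E"
    unfolding D_def E_def z_def using t by (simp add: algebra_simps)
  also have "\<bar>\<dots>\<bar> \<le> t * \<bar>D\<bar> + t * E"
    using t E abs_triangle_ineq4[of "- (t * D)" "t * E"] by (simp add: abs_mult)
  also have "\<dots> \<le> t * (real d * (x\<^sup>2 + y\<^sup>2)) + t * z\<^sup>2"
    using D E t by (intro add_mono mult_left_mono) auto
  also have "\<dots> = (real d * (\<alpha>\<^sup>2 + \<beta>\<^sup>2) + \<theta>\<^sup>2) / t"
    unfolding x_def y_def z_def using t by (simp add: field_simps power2_eq_square)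
  finally show ?thesis unfolding x_def y_def \<theta>_def .
qed

lemma tendsto_block_cdf_tail:
  assumes "\<alpha> \<ge> 0" "\<beta> \<ge> 0"
  shows "((\<lambda>t. t * (1 - block_cdf (1 - \<alpha> / t) (1 - \<beta> / t))) \<longlongrightarrow> block_stdf \<alpha> \<beta>) at_top"
proof (rule tendsto_of_abs_diff_le)
  show "\<forall>\<^sub>F t in at_top. \<bar>t * (1 - block_cdf (1 - \<alpha> / t) (1 - \<beta> / t)) - block_stdf \<alpha> \<beta>\<bar>
      \<le> (real d * (\<alpha>\<^sup>2 + \<beta>\<^sup>2) + (block_stdf \<alpha> \<beta>)\<^sup>2) / t"
    using eventually_ge_at_top[of "\<alpha> + \<beta> + 1"] by eventually_elim (rule block_cdf_tail_bound[OF assms])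
  show "((\<lambda>t. (real d * (\<alpha>\<^sup>2 + \<beta>\<^sup>2) + (block_stdf \<alpha> \<beta>)\<^sup>2) / t) \<longlongrightarrow> 0) at_top"
    by (intro tendsto_divide_0[OF tendsto_const] filterlim_at_top_imp_at_infinity filterlim_ident)
qed

lemma prob_Mx_block_gt:
  "prob {\<omega> \<in> space P. Mx P X (B j') \<omega> > b} = 1 - block_cdf 1 b"
proof -
  have "{\<omega> \<in> space P. Mx P X (B j') \<omega> > b} = space P - {\<omega> \<in> space P. Mx P X (B j') \<omega> \<le> b}"
    by auto
  then show ?thesis
    using prob_compl[of "{\<omega> \<in> space P. Mx P X (B j') \<omega> \<le> b}"] Mx_block_le_one
    unfolding block_cdf_def by simp
qed

lemma prob_Mx_blocks_gt:
  "prob ({\<omega> \<in> space P. Mx P X (B j) \<omega> > a} \<inter> {\<omega> \<in> space P. Mx P X (B j') \<omega> > b})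
     = 1 - block_cdf a 1 - block_cdf 1 b + block_cdf a b"
proof -
  define A where "A = {\<omega> \<in> space P. Mx P X (B j) \<omega> \<le> a}"
  define A' where "A' = {\<omega> \<in> space P. Mx P X (B j') \<omega> \<le> b}"
  have [measurable]: "A \<in> sets P" "A' \<in> sets P" unfolding A_def A'_def by measurable
  have "{\<omega> \<in> space P. Mx P X (B j) \<omega> > a} \<inter> {\<omega> \<in> space P. Mx P X (B j') \<omega> > b} = space P - (A \<union> A')"
    unfolding A_def A'_def by auto
  then have "prob ({\<omega> \<in> space P. Mx P X (B j) \<omega> > a} \<inter> {\<omega> \<in> space P. Mx P X (B j') \<omega> > b})
      = 1 - (prob A + prob A' - prob (A' \<inter> A))"
    using prob_compl[of "A \<union> A'"] finite_measure_Union'[of A A'] finite_measure_Diff'[of A' A] by simp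
  moreover have "prob A = block_cdf a 1" "prob A' = block_cdf 1 b" "prob (A' \<inter> A) = block_cdf a b"
    unfolding A_def A'_def block_cdf_def using Mx_block_le_one by (auto intro: arg_cong[where f = prob])
  ultimately show ?thesis by simp
qed

lemma tendsto_cond_prob_Mx_blocks:
  assumes "l1 > 0" "l2 > 0"
  shows "((\<lambda>t. cond_prob P {\<omega> \<in> space P. Mx P X (B j) \<omega> > 1 - l1 / t}
                          {\<omega> \<in> space P. Mx P X (B j') \<omega> > 1 - l2 / t} * block_stdf 0 l2)
          \<longlongrightarrow> block_stdf l1 0 + block_stdf 0 l2 - block_stdf l1 l2) at_top"
proof -
  let ?joint = "\<lambda>t. t * (1 - block_cdf (1 - l1 / t) 1) + t * (1 - block_cdf 1 (1 - l2 / t))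
    - t * (1 - block_cdf (1 - l1 / t) (1 - l2 / t))"
  let ?single = "\<lambda>t. t * (1 - block_cdf 1 (1 - l2 / t))"
  have single: "(?single \<longlongrightarrow> block_stdf 0 l2) at_top"
    using tendsto_block_cdf_tail[of 0 l2] assms by simp
  have joint: "(?joint \<longlongrightarrow> block_stdf l1 0 + block_stdf 0 l2 - block_stdf l1 l2) at_top"
    using tendsto_block_cdf_tail[of l1 0] tendsto_block_cdf_tail[of l1 l2] single assms
    by (intro tendsto_add tendsto_diff) auto
  have pos: "block_stdf 0 l2 > 0" using block_stdf_ge_max[of 0 l2] assms by simp
  have "((\<lambda>t. ?joint t / ?single t * block_stdf 0 l2) \<longlongrightarrow>
      (block_stdf l1 0 + block_stdf 0 l2 - block_stdf l1 l2) / block_stdf 0 l2 * block_stdf 0 l2) at_top"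
    using pos by (intro tendsto_mult tendsto_divide joint single tendsto_const) auto
  then have "((\<lambda>t. ?joint t / ?single t * block_stdf 0 l2)
      \<longlongrightarrow> block_stdf l1 0 + block_stdf 0 l2 - block_stdf l1 l2) at_top"
    using pos by simp
  moreover have "\<forall>\<^sub>F t in at_top. ?joint t / ?single t * block_stdf 0 l2
      = cond_prob P {\<omega> \<in> space P. Mx P X (B j) \<omega> > 1 - l1 / t}
          {\<omega> \<in> space P. Mx P X (B j') \<omega> > 1 - l2 / t} * block_stdf 0 l2"
    using eventually_gt_at_top[of 0]
  proof eventually_elim
    case (elim t)
    have "?joint t = t * (1 - block_cdf (1 - l1 / t) 1 - block_cdf 1 (1 - l2 / t)
        + block_cdf (1 - l1 / t) (1 - l2 / t))"
      by (simp add: algebra_simps)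
    then have "?joint t / ?single t = (1 - block_cdf (1 - l1 / t) 1 - block_cdf 1 (1 - l2 / t)
        + block_cdf (1 - l1 / t) (1 - l2 / t)) / (1 - block_cdf 1 (1 - l2 / t))"
      using elim by simp
    then show ?case unfolding cond_prob_def prob_Mx_blocks_gt prob_Mx_block_gt by simp
  qed
  ultimately show ?thesis by (rule Lim_transform_eventually)
qed


lemma expectation_of_block_cdf_powr:
  assumes [measurable]: "V \<in> borel_measurable P"
    and bounds: "\<And>\<omega>. \<omega> \<in> space P \<Longrightarrow> 0 \<le> V \<omega> \<and> V \<omega> \<le> 1"
    and "\<alpha> \<ge> 0" "\<beta> \<ge> 0" "max \<alpha> \<beta> > 0"
    and cdf: "\<And>v. 0 < v \<Longrightarrow> v < 1 \<Longrightarrow> prob {\<omega> \<in> space P. V \<omega> \<le> v} = block_cdf (v powr \<alpha>) (v powr \<beta>)"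
  shows "expectation V = block_stdf \<alpha> \<beta> / (block_stdf \<alpha> \<beta> + 1)"
proof (rule expectation_eq_of_powr_cdf)
  show "block_stdf \<alpha> \<beta> > 0" using block_stdf_ge_max[of \<alpha> \<beta>] assms(3-5) by linarith
qed (use assms block_cdf_powr in auto)

lemma ext_dep_first_block: "ext_dep P X B (\<lambda>_. 1) {j} = block_stdf 1 0"
proof (rule ext_dep_eq_of_expectation)
  have "expectation (Mx P X (B j)) = block_stdf 1 0 / (block_stdf 1 0 + 1)"
    using Mx_block_nonneg Mx_block_le_one
    by (intro expectation_of_block_cdf_powr) (auto simp: block_cdf_def)
  then show "expectation (\<lambda>\<omega>. Max ((\<lambda>k. Mx P X (B k) \<omega> powr 1) ` {j}))
      = block_stdf 1 0 / (block_stdf 1 0 + 1)"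
    using Mx_block_nonneg by simp
qed (use block_stdf_ge_max[of 1 0] in auto)

lemma ext_dep_second_block: "ext_dep P X B (\<lambda>_. 1) {j'} = block_stdf 0 1"
proof (rule ext_dep_eq_of_expectation)
  have "expectation (Mx P X (B j')) = block_stdf 0 1 / (block_stdf 0 1 + 1)"
    using Mx_block_nonneg Mx_block_le_one
    by (intro expectation_of_block_cdf_powr) (auto simp: block_cdf_def)
  then show "expectation (\<lambda>\<omega>. Max ((\<lambda>k. Mx P X (B k) \<omega> powr 1) ` {j'}))
      = block_stdf 0 1 / (block_stdf 0 1 + 1)"
    using Mx_block_nonneg by simp
qed (use block_stdf_ge_max[of 0 1] in auto)

lemma ext_dep_blocks:
  assumes l: "l1 > 0" "l2 > 0" and lam: "lam j = 1 / l1" "lam j' = 1 / l2"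
  shows "ext_dep P X B lam {j, j'} = block_stdf l1 l2"
proof (rule ext_dep_eq_of_expectation)
  let ?V = "\<lambda>\<omega>. max (Mx P X (B j) \<omega> powr (1 / l1)) (Mx P X (B j') \<omega> powr (1 / l2))"
  have "{\<omega> \<in> space P. ?V \<omega> \<le> v} =
      {\<omega> \<in> space P. Mx P X (B j) \<omega> \<le> v powr l1 \<and> Mx P X (B j') \<omega> \<le> v powr l2}" if "0 < v" for v
    using powr_inverse_le_iff[OF Mx_block_nonneg(1) that l(1)]
      powr_inverse_le_iff[OF Mx_block_nonneg(2) that l(2)] by auto
  then have "expectation ?V = block_stdf l1 l2 / (block_stdf l1 l2 + 1)"
    using l Mx_block_nonneg Mx_block_le_one
    by (intro expectation_of_block_cdf_powr) (auto simp: block_cdf_def le_max_iff_disj intro: powr_le1)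
  moreover have "j \<noteq> j'" using blocks_nonempty blocks_disjoint by auto
  ultimately show "expectation (\<lambda>\<omega>. Max ((\<lambda>k. Mx P X (B k) \<omega> powr lam k) ` {j, j'}))
      = block_stdf l1 l2 / (block_stdf l1 l2 + 1)"
    using lam by simp
qed (use block_stdf_ge_max[of l1 l2] l in auto)

lemma tendsto_cond_prob_mult_ext_dep:
  assumes l: "l1 > 0" "l2 > 0" and lam: "lam j = 1 / l1" "lam j' = 1 / l2"
  shows "((\<lambda>t. cond_prob P {\<omega> \<in> space P. Mx P X (B j) \<omega> > 1 - l1 / t}
                          {\<omega> \<in> space P. Mx P X (B j') \<omega> > 1 - l2 / t}
               * l2 * ext_dep P X B (\<lambda>_. 1) {j'})
          \<longlongrightarrow> l1 * ext_dep P X B (\<lambda>_. 1) {j} + l2 * ext_dep P X B (\<lambda>_. 1) {j'}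
              - ext_dep P X B lam {j, j'}) at_top"
proof -
  have "block_stdf l1 0 = l1 * block_stdf 1 0" "block_stdf 0 l2 = l2 * block_stdf 0 1"
    using block_stdf_scale[of l1 1 0] block_stdf_scale[of l2 0 1] l by simp_all
  then show ?thesis
    using tendsto_cond_prob_Mx_blocks[OF l]
    unfolding ext_dep_first_block ext_dep_second_block ext_dep_blocks[OF l lam]
    by (simp add: mult.assoc)
qed

end

theorem mainTheorem6:
  fixes P :: "'a measure" and X :: "nat \<Rightarrow> 'a \<Rightarrow> real"
    and d p :: nat and B :: "nat \<Rightarrow> nat set"
    and \<sigma> :: "nat \<Rightarrow> real" and \<eta> :: real
    and j j' :: nat and lj lj' :: real
  assumes "prob_space P"
    and "d \<ge> 1"
    and rv: "\<And>i. i \<in> {1..d} \<Longrightarrow> X i \<in> borel_measurable P"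
    and sigma: "\<And>i. i \<in> {1..d} \<Longrightarrow> \<sigma> i > 0"
    and eta: "0 < \<eta>" "\<eta> \<le> 1"
    and marg: "\<And>i t. i \<in> {1..d} \<Longrightarrow> t > 0 \<Longrightarrow>
                  marg_cdf P X i t = exp (- \<sigma> i * t powr (- 1 / \<eta>))"
    and homog: "\<And>t s. (\<forall>i\<in>{1..d}. t i > 0) \<Longrightarrow> s > 0 \<Longrightarrow>
                  ell P X d (\<lambda>i. s * t i) = ereal (s powr (- 1 / \<eta>)) * ell P X d t"
    and p: "1 \<le> p" "p \<le> d"
    and blocks_ne: "\<And>k. k \<in> {1..p} \<Longrightarrow> B k \<noteq> {}"
    and blocks_interval: "\<And>k. k \<in> {1..p} \<Longrightarrow> \<exists>a b. B k = {a..b}"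
    and blocks_ordered: "\<And>k k' x y. k \<in> {1..p} \<Longrightarrow> k' \<in> {1..p} \<Longrightarrow> k < k' \<Longrightarrow>
                  x \<in> B k \<Longrightarrow> y \<in> B k' \<Longrightarrow> x < y"
    and blocks_cover: "(\<Union>k\<in>{1..p}. B k) = {1..d}"
    and jj: "1 \<le> j" "j < j'" "j' \<le> p"
    and lam: "lj > 0" "lj' > 0"
  shows
    "((\<lambda>t. cond_prob P {\<omega> \<in> space P. Mx P X (B j) \<omega> > 1 - lj / t}
                       {\<omega> \<in> space P. Mx P X (B j') \<omega> > 1 - lj' / t}
            * lj' * ext_dep P X B (\<lambda>_. 1) {j'})
       \<longlongrightarrow> lj * ext_dep P X B (\<lambda>_. 1) {j} + lj' * ext_dep P X B (\<lambda>_. 1) {j'}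
           - ext_dep P X B (\<lambda>k. if k = j then 1 / lj else 1 / lj') {j, j'}) at_top
     \<and> ((\<lambda>t. cond_prob P {\<omega> \<in> space P. Mx P X (B j') \<omega> > 1 - lj' / t}
                       {\<omega> \<in> space P. Mx P X (B j) \<omega> > 1 - lj / t}
            * lj * ext_dep P X B (\<lambda>_. 1) {j})
       \<longlongrightarrow> lj * ext_dep P X B (\<lambda>_. 1) {j} + lj' * ext_dep P X B (\<lambda>_. 1) {j'}
           - ext_dep P X B (\<lambda>k. if k = j then 1 / lj else 1 / lj') {j, j'}) at_top"
proof -
  have j: "j \<in> {1..p}" "j' \<in> {1..p}" using jj by auto
  \<comment> \<open>Only \<open>B j, B j' \<subseteq> {1..d}\<close> and their disjointness matter.\<close>
  have disjoint: "B j \<inter> B j' = {}" using blocks_ordered[OF j jj(2)] by fastforce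
  interpret model: max_stable_model P X d \<sigma> \<eta>
    by (rule max_stable_model.intro[OF assms(1) rv sigma eta marg homog])
  interpret first: block_pair P X d \<sigma> \<eta> B j j'
    using blocks_cover blocks_ne j disjoint
    by (intro block_pair.intro block_pair_axioms.intro model.max_stable_model_axioms) auto
  interpret second: block_pair P X d \<sigma> \<eta> B j' j
    using blocks_cover blocks_ne j disjoint
    by (intro block_pair.intro block_pair_axioms.intro model.max_stable_model_axioms) auto
  let ?lam = "\<lambda>k. if k = j then 1 / lj else 1 / lj'"
  have "?lam j = 1 / lj" "?lam j' = 1 / lj'" using jj by auto
  then show ?thesis
    using first.tendsto_cond_prob_mult_ext_dep[OF lam] second.tendsto_cond_prob_mult_ext_dep[OF lam(2,1)]
    by (simp add: insert_commute add.commute)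
qed

end
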